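(* Let $c=\min_{x\in\partial D}\phi(x;p,p')$, assume $0<\eta'<\inf_{\omega\in S^2}s(\omega;p,p',c)$, and fix $0<s<\eta'$. For $\omega\in S^2$: (i) if $p'+s(\omega;p,p',c)\omega\in\partial D$, then $\min_{x\in\partial D}\phi(x;p,p'+s\omega)=c-s$; (ii) if $p'+s(\omega;p,p',c)\omega\notin\partial D$, then $\min_{x\in\partial D}\phi(x;p,p'+s\omega)>c-s$. Consequently $$\Lambda_{\partial D}(p,p')=\{p'+s(\omega;p,p',c)\omega:\ \omega\in S^2,\ \min_{x\in\partial D}\phi(x;p,p'+s\omega)=c-s\}.$$
   Context: Let $D\subset\mathbb R^3$ be a nonempty bounded open set with $C^2$ boundary; $p,p'\in\mathbb R^3\setminus\overline D$ with $[p,p']\cap\overline D=\emptyset$ (so $c>|p-p'|$); $B'$ is the open ball with center $p'$ and radius $\eta'$, $\overline{B'}\cap\overline D=\emptyset$. $\phi(x;y,y')=|y-x|+|x-y'|$; $E_c(p,p')=\{x:\phi(x;p,p')=c\}$; $\Lambda_{\partial D}(p,p')=\{q\in\partial D:\phi(q;p,p')=c\}$. For $\omega\in S^2$, $s(\omega;p,p',c)=\dfrac{c^2-|p-p'|^2}{2\{c-\omega\cdot(p-p')\}}$, so that $p'+s(\omega;p,p',c)\omega$ is the unique point of $E_c(p,p')$ on the ray $\{p'+t\omega:t>0\}$. *)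

theory Defs
  imports "HOL-Analysis.Analysis"
begin

type_synonym R3 = "real ^ 3"

definition phi :: "R3 \<Rightarrow> R3 \<Rightarrow> R3 \<Rightarrow> real" where
  "phi x y y' = dist y x + dist x y'"

definition ellipsoid :: "real \<Rightarrow> R3 \<Rightarrow> R3 \<Rightarrow> R3 set" where
  "ellipsoid c p p' = {x. phi x p p' = c}"

definition Lambda :: "R3 set \<Rightarrow> real \<Rightarrow> R3 \<Rightarrow> R3 \<Rightarrow> R3 set" where
  "Lambda D c p p' = {q \<in> frontier D. phi q p p' = c}"

definition sfun :: "R3 \<Rightarrow> R3 \<Rightarrow> R3 \<Rightarrow> real \<Rightarrow> real" where
  "sfun \<omega> p p' c = (c\<^sup>2 - (norm (p - p'))\<^sup>2) / (2 * (c - \<omega> \<bullet> (p - p')))"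

text \<open>min over the boundary of phi(x; y, y') (the minimum is attained since the
  boundary is compact; we write it as an infimum).\<close>
definition min_phi :: "R3 set \<Rightarrow> R3 \<Rightarrow> R3 \<Rightarrow> real" where
  "min_phi D y y' = Inf ((\<lambda>x. phi x y y') ` frontier D)"

definition C2_boundary :: "R3 set \<Rightarrow> bool" where
  "C2_boundary D \<longleftrightarrow>
     (\<forall>q \<in> frontier D. \<exists>U \<rho> g H.
        open U \<and> q \<in> U \<and>
        (\<forall>x \<in> U. (\<rho> has_derivative (\<lambda>h. g x \<bullet> h)) (at x)) \<and>
        (\<forall>x \<in> U. (g has_derivative H x) (at x)) \<and>
        (\<forall>v. continuous_on U (\<lambda>x. H x v)) \<and>
        (\<forall>x \<in> U. g x \<noteq> 0) \<and>
        D \<inter> U = {x \<in> U. \<rho> x < 0})"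

end

theory Submission
  imports Defs
begin

text \<open>Moving the focus \<open>p'\<close> to \<open>p' + s \<omega>\<close> lowers \<open>phi x\<close> by at most \<open>s\<close> (triangle
  inequality), and by exactly \<open>s\<close> precisely when \<open>x\<close> lies on the ray from \<open>p'\<close> in
  direction \<open>\<omega>\<close> beyond the new focus. Hence the new minimum over \<open>\<partial>D\<close> is at least
  \<open>c - s\<close>, with equality iff some point of \<open>\<partial>D\<close> on that ray realises \<open>phi = c\<close>; on the
  ray the spheroid \<open>E_c(p,p')\<close> is met only at \<open>p' + s(\<omega>) \<omega>\<close>, and \<open>s < s(\<omega>)\<close> puts this
  point beyond the new focus.\<close>

lemma min_phi_attained:
  assumes "bounded D" "D \<noteq> {}"
  obtains x where "x \<in> frontier D" "min_phi D y y' = phi x y y'"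
    "\<And>z. z \<in> frontier D \<Longrightarrow> phi x y y' \<le> phi z y y'"
proof -
  have "D \<noteq> UNIV"
    using assms(1) not_bounded_UNIV by blast
  then have "frontier D \<noteq> {}"
    using assms(2) frontier_eq_empty by blast
  moreover have "continuous_on (frontier D) (\<lambda>x. phi x y y')"
    unfolding phi_def by (intro continuous_intros)
  ultimately obtain x where x: "x \<in> frontier D" "\<And>z. z \<in> frontier D \<Longrightarrow> phi x y y' \<le> phi z y y'"
    using continuous_attains_inf[OF compact_frontier_bounded[OF assms(1)]] by blast
  moreover have "min_phi D y y' = phi x y y'"
    unfolding min_phi_def by (rule cInf_eq_minimum) (use x in auto)
  ultimately show thesis
    using that by blast
qed

lemma dist_less_phi_off_segment:
  assumes "x \<notin> closed_segment y y'"
  shows "dist y y' < phi x y y'"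
  using assms dist_triangle[of y y' x] between[of y y' x] between_mem_segment[of y y' x]
  unfolding phi_def by (auto simp: dist_commute)

lemma phi_shift_focus_ge: "phi x y y' \<le> phi x y z + dist z y'"
  unfolding phi_def using dist_triangle[of x y' z] by simp

lemma phi_shift_focus_eq_iff:
  fixes p' w :: R3
  assumes w: "norm w = 1" and s: "0 < s"
  shows "phi x y (p' + s *\<^sub>R w) = phi x y p' - s \<longleftrightarrow> (\<exists>t\<ge>s. x = p' + t *\<^sub>R w)"
proof -
  define q where "q = p' + s *\<^sub>R w"
  have "phi x y q = phi x y p' - s \<longleftrightarrow> dist x p' = dist x q + dist q p'"
    using w s unfolding phi_def q_def by (auto simp: dist_norm)
  also have "\<dots> \<longleftrightarrow> norm (x - q) *\<^sub>R (s *\<^sub>R w) = s *\<^sub>R (x - q)"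
    unfolding dist_triangle_eq using w s by (simp add: q_def)
  also have "\<dots> \<longleftrightarrow> x - q = norm (x - q) *\<^sub>R w"
    using s by (metis scaleR_cancel_left scaleR_left_commute less_irrefl)
  also have "\<dots> \<longleftrightarrow> (\<exists>t\<ge>s. x = p' + t *\<^sub>R w)"
  proof
    assume "x - q = norm (x - q) *\<^sub>R w"
    then show "\<exists>t\<ge>s. x = p' + t *\<^sub>R w"
      by (intro exI[of _ "s + norm (x - q)"]) (auto simp: q_def scaleR_left_distrib algebra_simps)
  next
    assume "\<exists>t\<ge>s. x = p' + t *\<^sub>R w"
    then obtain t where "s \<le> t" "x - q = (t - s) *\<^sub>R w"
      by (auto simp: q_def scaleR_left_diff_distrib)
    then show "x - q = norm (x - q) *\<^sub>R w"
      using w by simp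
  qed
  finally show ?thesis
    unfolding q_def .
qed

lemma sfun_pos:
  assumes "dist p p' < c" "norm w = 1"
  shows "0 < sfun w p p' c"
proof -
  have "w \<bullet> (p - p') \<le> dist p p'"
    using norm_cauchy_schwarz[of w "p - p'"] assms(2) by (simp add: dist_norm)
  moreover have "(dist p p')\<^sup>2 < c\<^sup>2"
    using assms(1) by (intro power_strict_mono) auto
  ultimately show ?thesis
    using assms(1) unfolding sfun_def by (simp add: dist_norm)
qed

text \<open>Squaring \<open>dist p (p' + t w) = c - t\<close> leaves an equation that is linear in \<open>t\<close>;
  its solution is \<open>sfun\<close>.\<close>

lemma phi_ray_eq_iff:
  assumes c: "dist p p' < c" and w: "norm w = 1" and t: "0 \<le> t"
  shows "phi (p' + t *\<^sub>R w) p p' = c \<longleftrightarrow> t = sfun w p p' c"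
proof -
  define a where "a = w \<bullet> (p - p')"
  define d where "d = dist p p'"
  have a_le: "a \<le> d"
    using norm_cauchy_schwarz[of w "p - p'"] w unfolding a_def d_def by (simp add: dist_norm)
  have d0: "0 \<le> d"
    unfolding d_def by simp
  have den: "0 < c - a"
    using a_le c unfolding d_def by simp
  have dist_sq: "(dist p (p' + t *\<^sub>R w))\<^sup>2 = d\<^sup>2 - 2 * t * a + t\<^sup>2"
  proof -
    have "(dist p (p' + t *\<^sub>R w))\<^sup>2 = ((p - p') - t *\<^sub>R w) \<bullet> ((p - p') - t *\<^sub>R w)"
      by (simp add: dist_norm power2_norm_eq_inner algebra_simps)
    also have "\<dots> = d\<^sup>2 - 2 * t * a + t\<^sup>2 * (w \<bullet> w)"
      unfolding a_def d_def dist_norm power2_norm_eq_inner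
      by (simp add: inner_diff_left inner_diff_right inner_commute algebra_simps power2_eq_square)
    finally show ?thesis
      using w power2_norm_eq_inner[of w] by simp
  qed
  have "phi (p' + t *\<^sub>R w) p p' = c \<longleftrightarrow> dist p (p' + t *\<^sub>R w) = c - t"
    using w t unfolding phi_def by (auto simp: dist_norm)
  also have "\<dots> \<longleftrightarrow> t \<le> c \<and> (dist p (p' + t *\<^sub>R w))\<^sup>2 = (c - t)\<^sup>2"
    by (smt (verit) power2_eq_iff_nonneg zero_le_dist)
  also have "\<dots> \<longleftrightarrow> t \<le> c \<and> t * (2 * (c - a)) = c\<^sup>2 - d\<^sup>2"
    unfolding dist_sq by (auto simp: power2_eq_square algebra_simps)
  also have "\<dots> \<longleftrightarrow> t = sfun w p p' c"
  proof -
    have "sfun w p p' c * (2 * (c - a)) = c\<^sup>2 - d\<^sup>2"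
      using den unfolding sfun_def a_def d_def by (simp add: dist_norm)
    moreover have "c\<^sup>2 - d\<^sup>2 \<le> c * (2 * (c - a))"
    proof -
      have "c * a \<le> c * d"
        using a_le c zero_le_dist[of p p'] unfolding d_def by (intro mult_left_mono) linarith+
      moreover have "0 \<le> c * c - 2 * (c * d) + d * d"
        using zero_le_power2[of "c - d"] by (simp add: power2_eq_square algebra_simps)
      ultimately show ?thesis
        by (simp add: power2_eq_square algebra_simps)
    qed
    ultimately show ?thesis
      using den by (smt (verit) mult_right_mono mult_right_cancel)
  qed
  finally show ?thesis .
qed

lemma Lambda_eq_rays:
  assumes c: "dist p p' < c" and p': "p' \<notin> frontier D"
  shows "Lambda D c p p' =
    {p' + sfun w p p' c *\<^sub>R w | w. w \<in> sphere 0 1 \<and> p' + sfun w p p' c *\<^sub>R w \<in> frontier D}"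
proof (intro set_eqI iffI)
  fix q
  assume "q \<in> Lambda D c p p'"
  then have q: "q \<in> frontier D" "phi q p p' = c"
    unfolding Lambda_def by auto
  define w where "w = sgn (q - p')"
  have "q \<noteq> p'"
    using q(1) p' by blast
  then have w: "norm w = 1" and q_ray: "q = p' + norm (q - p') *\<^sub>R w"
    unfolding w_def by (simp_all add: norm_sgn sgn_div_norm)
  then have "norm (q - p') = sfun w p p' c"
    using phi_ray_eq_iff[OF c w norm_ge_zero[of "q - p'"]] q(2) by metis
  then show "q \<in> {p' + sfun w p p' c *\<^sub>R w | w. w \<in> sphere 0 1 \<and> p' + sfun w p p' c *\<^sub>R w \<in> frontier D}"
    using q(1) q_ray w by (intro CollectI exI[of _ w]) auto
next
  fix q
  assume "q \<in> {p' + sfun w p p' c *\<^sub>R w | w. w \<in> sphere 0 1 \<and> p' + sfun w p p' c *\<^sub>R w \<in> frontier D}"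
  then obtain w where w: "norm w = 1" and q: "q = p' + sfun w p p' c *\<^sub>R w" "q \<in> frontier D"
    by auto
  then show "q \<in> Lambda D c p p'"
    using phi_ray_eq_iff[OF c w less_imp_le[OF sfun_pos[OF c w]]] unfolding Lambda_def by simp
qed

lemma min_phi_shift_focus:
  assumes D: "bounded D" "D \<noteq> {}" and c_def: "c = min_phi D p p'" and c: "dist p p' < c"
    and w: "norm w = 1" and s: "0 < s" "s < sfun w p p' c"
  shows "c - s \<le> min_phi D p (p' + s *\<^sub>R w)"
    and "min_phi D p (p' + s *\<^sub>R w) = c - s \<longleftrightarrow> p' + sfun w p p' c *\<^sub>R w \<in> frontier D"
proof -
  define q where "q = p' + s *\<^sub>R w"
  define P where "P = p' + sfun w p p' c *\<^sub>R w"
  have c_min: "c \<le> phi z p p'" if "z \<in> frontier D" for z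
    using min_phi_attained[OF D, of p p'] c_def that by metis
  have q_dist: "dist q p' = s"
    using w s unfolding q_def by (simp add: dist_norm)
  have shift_ge: "phi z p p' - s \<le> phi z p q" for z
    using phi_shift_focus_ge[of z p p' q] q_dist by simp
  obtain x where x: "x \<in> frontier D" "min_phi D p q = phi x p q"
    and x_min: "\<And>z. z \<in> frontier D \<Longrightarrow> phi x p q \<le> phi z p q"
    using min_phi_attained[OF D, of p q] by metis
  show lower: "c - s \<le> min_phi D p (p' + s *\<^sub>R w)"
    using c_min[OF x(1)] shift_ge[of x] x(2) unfolding q_def by simp
  have P_on_E: "phi P p p' = c"
    using phi_ray_eq_iff[OF c w less_imp_le[OF sfun_pos[OF c w]]] unfolding P_def by simp
  have P_shift: "phi P p q = phi P p p' - s"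
    using phi_shift_focus_eq_iff[OF w s(1), of P p p'] s(2) unfolding P_def q_def
    by (auto intro!: exI[of _ "sfun w p p' c"])
  show "min_phi D p (p' + s *\<^sub>R w) = c - s \<longleftrightarrow> P \<in> frontier D"
  proof
    assume "P \<in> frontier D"
    then have "min_phi D p q \<le> c - s"
      using x_min x(2) P_on_E P_shift by fastforce
    then show "min_phi D p (p' + s *\<^sub>R w) = c - s"
      using lower unfolding q_def by simp
  next
    assume "min_phi D p (p' + s *\<^sub>R w) = c - s"
    then have "phi x p p' = c" and "phi x p q = phi x p p' - s"
      using c_min[OF x(1)] shift_ge[of x] x(2) unfolding q_def by auto
    moreover obtain t where "s \<le> t" "x = p' + t *\<^sub>R w"
      using \<open>phi x p q = phi x p p' - s\<close> phi_shift_focus_eq_iff[OF w s(1)] unfolding q_def by blast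
    ultimately have "x = P"
      using phi_ray_eq_iff[OF c w] s(1) unfolding P_def by auto
    then show "P \<in> frontier D"
      using x(1) by simp
  qed
qed

theorem proposition5p1:
  fixes D :: "R3 set" and p p' :: R3 and \<eta>' s c :: real
  assumes D_ne: "D \<noteq> {}" and D_bdd: "bounded D" and D_open: "open D"
    and D_C2: "C2_boundary D"
    and seg: "closed_segment p p' \<inter> closure D = {}"
    and ball: "closure (ball p' \<eta>') \<inter> closure D = {}"
    and c_def: "c = min_phi D p p'"
    and eta_pos: "0 < \<eta>'"
    and eta_lt: "\<eta>' < (INF \<omega>\<in>sphere 0 1. sfun \<omega> p p' c)"
    and s_pos: "0 < s" and s_lt: "s < \<eta>'"
  shows "(\<forall>\<omega> \<in> sphere 0 1.
            (p' + sfun \<omega> p p' c *\<^sub>R \<omega> \<in> frontier D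
               \<longrightarrow> min_phi D p (p' + s *\<^sub>R \<omega>) = c - s) \<and>
            (p' + sfun \<omega> p p' c *\<^sub>R \<omega> \<notin> frontier D
               \<longrightarrow> min_phi D p (p' + s *\<^sub>R \<omega>) > c - s))
       \<and> Lambda D c p p' =
           {p' + sfun \<omega> p p' c *\<^sub>R \<omega> | \<omega>.
              \<omega> \<in> sphere 0 1 \<and> min_phi D p (p' + s *\<^sub>R \<omega>) = c - s}"
proof -
  have frontier_off_seg: "frontier D \<inter> closed_segment p p' = {}"
    using seg frontier_def closure_subset by fastforce
  obtain q0 where "q0 \<in> frontier D" "c = phi q0 p p'"
    using min_phi_attained[OF D_bdd D_ne, of p p'] c_def by metis
  then have c: "dist p p' < c"
    using dist_less_phi_off_segment frontier_off_seg by blast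
  have "p' \<notin> frontier D"
    using frontier_off_seg by auto
  have "s < sfun w p p' c" if "w \<in> sphere 0 1" for w
  proof -
    have "bdd_below ((\<lambda>\<omega>. sfun \<omega> p p' c) ` sphere 0 1)"
      using sfun_pos[OF c] by (intro bdd_belowI[of _ 0]) (auto intro: less_imp_le)
    then show ?thesis
      using cINF_lower[of _ _ w] that eta_lt s_lt by fastforce
  qed
  then have shift: "c - s \<le> min_phi D p (p' + s *\<^sub>R w)"
      "min_phi D p (p' + s *\<^sub>R w) = c - s \<longleftrightarrow> p' + sfun w p p' c *\<^sub>R w \<in> frontier D"
    if "w \<in> sphere 0 1" for w
    using min_phi_shift_focus[OF D_bdd D_ne c_def c _ s_pos] that by auto
  show ?thesis
    unfolding Lambda_eq_rays[OF c \<open>p' \<notin> frontier D\<close>]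
    using shift by (fastforce simp: order_less_le)
qed

end
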